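(* Let $G_f$ and $G_g$ be ROBDDs over the same variable ordering, representing boolean functions $f$ and $g$, whose node identifiers are compact and whose nodes respect the extended ordering described in the context. Then $f\equiv g$ if and only if for every level $i$ and every $j$, the $j$-th node on level $i$ of $G_f$ and the $j$-th node on level $i$ of $G_g$ are numerically identical (i.e. equal as triples $(\mathit{uid},\mathit{low},\mathit{high})$).
   Context: An OBDD over variables $x_0,x_1,\dots$ is a rooted DAG with leaves $\bot,\top$ and internal nodes labelled by a variable index $i$ with low child (for $x_i=\bot$) and high child (for $x_i=\top$), labels strictly increasing along every path; the internal nodes with label $i$ form level $i$. Each internal node $v$ has a unique identifier $x_{i,\mathit{id}}=(i,\mathit{id})$ with $\mathit{id}\in\mathbb N$ unique within level $i$, and is represented as the triple $(x_{i,\mathit{id}},\mathit{low},\mathit{high})$ where $\mathit{low},\mathit{high}$ are identifiers of internal nodes or leaf values. An ROBDD is an OBDD with no node having two identical children and no two distinct nodes with the same label and the same children. Extended ordering: on identifiers and leaves, $(i_1,\mathit{id}_1)<(i_2,\mathit{id}_2)$ iff $i_1<i_2$ or ($i_1=i_2$ and $\mathit{id}_1<\mathit{id}_2$), and every internal identifier is smaller than $\bot$, with $\bot<\top$; moreover, for any two internal nodes $(x_{i,\mathit{id}_1},\mathit{low}_1,\mathit{high}_1)$ and $(x_{i,\mathit{id}_2},\mathit{low}_2,\mathit{high}_2)$ on the same level $i$, $\mathit{id}_1<\mathit{id}_2$ iff $\mathit{low}_1<\mathit{low}_2$ or ($\mathit{low}_1=\mathit{low}_2$ and $\mathit{high}_1<\mathit{high}_2$),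 children compared by this same ordering. Identifiers are compact if, for every level $i$ with $N_i$ nodes, the identifiers on level $i$ are exactly $0,1,\dots,N_i-1$ (so the $j$-th node on level $i$ in this order has identifier $j-1$). *)

theory Defs
  imports Main
begin

(* Identifiers: (level i, id).  Pointers are identifiers of internal nodes or leaf values. *)
type_synonym uid = "nat \<times> nat"

datatype ptr = Leaf bool | Node uid

type_synonym node = "uid \<times> ptr \<times> ptr"

record bdd =
  root :: ptr
  nodes :: "node set"

definition uid_of :: "node \<Rightarrow> uid" where "uid_of n = fst n"
definition low_of :: "node \<Rightarrow> ptr" where "low_of n = fst (snd n)"
definition high_of :: "node \<Rightarrow> ptr" where "high_of n = snd (snd n)"
definition label_of :: "node \<Rightarrow> nat" where "label_of n = fst (uid_of n)"

fun ptr_less :: "ptr \<Rightarrow> ptr \<Rightarrow> bool" where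
  "ptr_less (Node (i1, id1)) (Node (i2, id2)) = (i1 < i2 \<or> (i1 = i2 \<and> id1 < id2))"
| "ptr_less (Node _) (Leaf _) = True"
| "ptr_less (Leaf _) (Node _) = False"
| "ptr_less (Leaf b1) (Leaf b2) = (\<not> b1 \<and> b2)"

inductive reach :: "node set \<Rightarrow> ptr \<Rightarrow> uid \<Rightarrow> bool" for N where
  self: "reach N (Node u) u"
| low:  "(u, l, h) \<in> N \<Longrightarrow> reach N l v \<Longrightarrow> reach N (Node u) v"
| high: "(u, l, h) \<in> N \<Longrightarrow> reach N h v \<Longrightarrow> reach N (Node u) v"

definition valid_child :: "node set \<Rightarrow> nat \<Rightarrow> ptr \<Rightarrow> bool" where
  "valid_child N i p = (case p of Leaf _ \<Rightarrow> True
     | Node v \<Rightarrow> (\<exists>n\<in>N. uid_of n = v) \<and> i < fst v)"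

definition is_obdd :: "bdd \<Rightarrow> bool" where
  "is_obdd G \<longleftrightarrow>
     finite (nodes G)
   \<and> (\<forall>n1\<in>nodes G. \<forall>n2\<in>nodes G. uid_of n1 = uid_of n2 \<longrightarrow> n1 = n2)
   \<and> (\<forall>n\<in>nodes G. valid_child (nodes G) (label_of n) (low_of n)
                 \<and> valid_child (nodes G) (label_of n) (high_of n))
   \<and> (case root G of Leaf _ \<Rightarrow> nodes G = {}
       | Node u \<Rightarrow> (\<exists>n\<in>nodes G. uid_of n = u))
   \<and> (\<forall>n\<in>nodes G. reach (nodes G) (root G) (uid_of n))"

definition is_robdd :: "bdd \<Rightarrow> bool" where
  "is_robdd G \<longleftrightarrow> is_obdd G
   \<and> (\<forall>n\<in>nodes G. low_of n \<noteq> high_of n)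
   \<and> (\<forall>n1\<in>nodes G. \<forall>n2\<in>nodes G.
        label_of n1 = label_of n2 \<and> low_of n1 = low_of n2 \<and> high_of n1 = high_of n2
        \<longrightarrow> n1 = n2)"

inductive bdd_eval :: "node set \<Rightarrow> (nat \<Rightarrow> bool) \<Rightarrow> ptr \<Rightarrow> bool \<Rightarrow> bool" for N a where
  leaf: "bdd_eval N a (Leaf b) b"
| node: "((i, k), l, h) \<in> N \<Longrightarrow> bdd_eval N a (if a i then h else l) b
           \<Longrightarrow> bdd_eval N a (Node (i, k)) b"

definition represents :: "bdd \<Rightarrow> ((nat \<Rightarrow> bool) \<Rightarrow> bool) \<Rightarrow> bool" where
  "represents G f \<longleftrightarrow> (\<forall>a. bdd_eval (nodes G) a (root G) (f a))"

definition level_ids :: "bdd \<Rightarrow> nat \<Rightarrow> nat set" where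
  "level_ids G i = {k. \<exists>n\<in>nodes G. uid_of n = (i, k)}"

definition compact_ids :: "bdd \<Rightarrow> bool" where
  "compact_ids G \<longleftrightarrow> (\<forall>i. level_ids G i = {0..<card (level_ids G i)})"

definition respects_order :: "bdd \<Rightarrow> bool" where
  "respects_order G \<longleftrightarrow>
     (\<forall>n1\<in>nodes G. \<forall>n2\<in>nodes G. label_of n1 = label_of n2 \<longrightarrow>
        (snd (uid_of n1) < snd (uid_of n2) \<longleftrightarrow>
           (ptr_less (low_of n1) (low_of n2)
            \<or> (low_of n1 = low_of n2 \<and> ptr_less (high_of n1) (high_of n2)))))"

definition level_nodes :: "bdd \<Rightarrow> nat \<Rightarrow> node list" where
  "level_nodes G i =
     map (\<lambda>k. THE n. n \<in> nodes G \<and> uid_of n = (i, k)) (sorted_list_of_set (level_ids G i))"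

definition jth_node :: "bdd \<Rightarrow> nat \<Rightarrow> nat \<Rightarrow> node option" where
  "jth_node G i j = (if j < length (level_nodes G i) then Some (level_nodes G i ! j) else None)"

end

theory Submission
  imports Defs
begin

text \<open>
  In a reduced OBDD the function denoted by a pointer determines the pointer. This follows by
  downward induction over the levels: a node on level k depends essentially on x_k, because its
  two children are distinct and hence, inductively, denote distinct functions, whereas no
  pointer to a deeper level depends on x_k; two nodes on level k with the same function have the
  same cofactors, hence the same children, hence coincide.

  Consequently the functions of the nodes on level k of an ROBDD for f are exactly the
  subfunctions of f obtained by fixing x_0, ..., x_(k-1) that depend essentially on x_k. For two
  ROBDDs for f whose nodes agree on all levels deeper than k, every node on level k of one thus
  has a node with the same children on level k of the other. Compact identifiers respecting the
  extended ordering make the identifier of a node the number of child pairs on its level that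
  are smaller than its own, so the nodes on level k agree as well. Conversely, equal node sets
  and equal roots evaluate identically, and the roots agree as soon as they are both internal
  or both the same leaf, since every node is reachable from the root.
\<close>

section \<open>Well-formed and reduced node sets\<close>

definition valid_ptr :: "node set \<Rightarrow> ptr \<Rightarrow> bool" where
  "valid_ptr N p \<longleftrightarrow> (case p of Leaf _ \<Rightarrow> True | Node u \<Rightarrow> (\<exists>l h. (u, l, h) \<in> N))"

text \<open>Leaves count as lying on every level.\<close>
definition level_ge :: "nat \<Rightarrow> ptr \<Rightarrow> bool" where
  "level_ge k p \<longleftrightarrow> (case p of Leaf _ \<Rightarrow> True | Node u \<Rightarrow> k \<le> fst u)"

definition wf_nodes :: "node set \<Rightarrow> bool" where
  "wf_nodes N \<longleftrightarrow> finite N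
     \<and> (\<forall>u l h l' h'. (u, l, h) \<in> N \<longrightarrow> (u, l', h') \<in> N \<longrightarrow> l' = l \<and> h' = h)
     \<and> (\<forall>u l h. (u, l, h) \<in> N \<longrightarrow> valid_ptr N l \<and> valid_ptr N h
          \<and> level_ge (Suc (fst u)) l \<and> level_ge (Suc (fst u)) h)"

definition reduced :: "node set \<Rightarrow> bool" where
  "reduced N \<longleftrightarrow> wf_nodes N
     \<and> (\<forall>u l h. (u, l, h) \<in> N \<longrightarrow> l \<noteq> h)
     \<and> (\<forall>u v l h. (u, l, h) \<in> N \<longrightarrow> (v, l, h) \<in> N \<longrightarrow> fst u = fst v \<longrightarrow> u = v)"

definition ptrs_from :: "node set \<Rightarrow> nat \<Rightarrow> ptr set" where
  "ptrs_from N k = {p. valid_ptr N p \<and> level_ge k p}"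

lemma valid_ptr_simps [simp]:
  "valid_ptr N (Leaf b)"
  "valid_ptr N (Node u) \<longleftrightarrow> (\<exists>l h. (u, l, h) \<in> N)"
  by (simp_all add: valid_ptr_def)

lemma level_ge_simps [simp]:
  "level_ge k (Leaf b)"
  "level_ge k (Node u) \<longleftrightarrow> k \<le> fst u"
  by (simp_all add: level_ge_def)

lemma level_ge_0 [simp]: "level_ge 0 p"
  by (cases p) simp_all

lemma ptrs_from_0 [simp]: "ptrs_from N 0 = {p. valid_ptr N p}"
  by (simp add: ptrs_from_def)

lemma wf_nodes_finite: "wf_nodes N \<Longrightarrow> finite N"
  by (simp add: wf_nodes_def)

lemma wf_nodes_unique: "wf_nodes N \<Longrightarrow> (u, l, h) \<in> N \<Longrightarrow> (u, l', h') \<in> N \<Longrightarrow> l' = l \<and> h' = h"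
  unfolding wf_nodes_def by blast

lemma inj_on_fst_nodes: "wf_nodes N \<Longrightarrow> inj_on fst N"
  unfolding inj_on_def by (metis prod.collapse wf_nodes_unique)

lemma wf_nodes_children:
  assumes "wf_nodes N" and "(u, l, h) \<in> N"
  shows "valid_ptr N l" "valid_ptr N h" "level_ge (Suc (fst u)) l" "level_ge (Suc (fst u)) h"
  using assms unfolding wf_nodes_def by blast+

lemma reduced_wf_nodes: "reduced N \<Longrightarrow> wf_nodes N"
  by (simp add: reduced_def)

lemma reduced_children_neq: "reduced N \<Longrightarrow> (u, l, h) \<in> N \<Longrightarrow> l \<noteq> h"
  unfolding reduced_def by blast

lemma reduced_unique_children:
  "reduced N \<Longrightarrow> (u, l, h) \<in> N \<Longrightarrow> (v, l, h) \<in> N \<Longrightarrow> fst u = fst v \<Longrightarrow> u = v"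
  unfolding reduced_def by blast

lemma node_on_level:
  assumes "p \<in> ptrs_from N k" and "p \<notin> ptrs_from N (Suc k)"
  obtains u l h where "p = Node u" and "(u, l, h) \<in> N" and "fst u = k"
proof (cases p)
  case (Node v)
  with assms obtain l h where "(v, l, h) \<in> N" and "fst v = k"
    by (auto simp: ptrs_from_def)
  with Node show thesis
    by (rule that)
qed (use assms in \<open>simp add: ptrs_from_def\<close>)

lemma leaf_if_below_all_nodes:
  assumes "\<forall>(u, l, h) \<in> N. fst u < k" and "p \<in> ptrs_from N k"
  obtains b where "p = Leaf b"
  using assms by (cases p) (fastforce simp: ptrs_from_def)+

lemma level_induct [consumes 1, case_names bottom step]:
  assumes "finite N"
    and P_bottom: "\<And>k. \<forall>(u, l, h) \<in> N. fst u < k \<Longrightarrow> P k"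
    and P_step: "\<And>k. P (Suc k) \<Longrightarrow> P k"
  shows "P k"
proof -
  obtain M where M: "\<forall>i \<in> fst ` fst ` N. i < M"
    using assms(1) finite_nat_set_iff_bounded by blast
  have "k \<le> max M k"
    by simp
  then show "P k"
  proof (induction rule: inc_induct)
    case base
    show ?case
      using M by (intro P_bottom) force
  next
    case (step n)
    from \<open>P (Suc n)\<close> show ?case
      by (rule P_step)
  qed
qed

lemma valid_child_iff: "valid_child N i p \<longleftrightarrow> valid_ptr N p \<and> level_ge (Suc i) p"
  by (cases p) (force simp: valid_child_def uid_of_def Suc_le_eq)+

lemma is_robdd_reduced: "is_robdd G \<Longrightarrow> reduced (nodes G)"
  unfolding is_robdd_def is_obdd_def reduced_def wf_nodes_def valid_child_iff
  by (fastforce simp: uid_of_def low_of_def high_of_def label_of_def)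

lemma is_robdd_valid_root: "is_robdd G \<Longrightarrow> valid_ptr (nodes G) (root G)"
  unfolding is_robdd_def is_obdd_def
  by (cases "root G") (force simp: uid_of_def)+

lemma is_robdd_reach: "is_robdd G \<Longrightarrow> (u, l, h) \<in> nodes G \<Longrightarrow> reach (nodes G) (root G) u"
  unfolding is_robdd_def is_obdd_def by (force simp: uid_of_def)

section \<open>The function denoted by a pointer\<close>

lemma bdd_eval_deterministic:
  assumes "wf_nodes N"
  shows "bdd_eval N a p b \<Longrightarrow> bdd_eval N a p b' \<Longrightarrow> b' = b"
proof (induction arbitrary: b' rule: bdd_eval.induct)
  case (leaf b)
  then show ?case
    by (auto elim: bdd_eval.cases)
next
  case (node i k l h b)
  from node.prems obtain l' h' where "((i, k), l', h') \<in> N"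
    and "bdd_eval N a (if a i then h' else l') b'"
    by (auto elim: bdd_eval.cases)
  with node wf_nodes_unique[OF assms] show ?case
    by blast
qed

lemma bdd_eval_exists:
  assumes "wf_nodes N" and "valid_ptr N p"
  shows "\<exists>b. bdd_eval N a p b"
proof -
  have "\<forall>p \<in> ptrs_from N k. \<exists>b. bdd_eval N a p b" for k
    using wf_nodes_finite[OF assms(1)]
  proof (induction k rule: level_induct)
    case (bottom k)
    then show ?case
      by (metis bdd_eval.leaf leaf_if_below_all_nodes)
  next
    case (step k)
    show ?case
    proof
      fix p
      assume p: "p \<in> ptrs_from N k"
      show "\<exists>b. bdd_eval N a p b"
      proof (cases "p \<in> ptrs_from N (Suc k)")
        case True
        with step.IH show ?thesis
          by blast
      next
        case False
        with p obtain u l h where "p = Node u" and u: "(u, l, h) \<in> N" and "fst u = k"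
          by (rule node_on_level)
        moreover have "\<exists>b. bdd_eval N a (if a (fst u) then h else l) b"
          using step.IH wf_nodes_children[OF assms(1) u] \<open>fst u = k\<close> by (simp add: ptrs_from_def)
        ultimately show ?thesis
          by (cases u) (auto intro: bdd_eval.node)
      qed
    qed
  qed
  from this[of 0] assms(2) show ?thesis
    by simp
qed

definition bdd_fun :: "node set \<Rightarrow> ptr \<Rightarrow> (nat \<Rightarrow> bool) \<Rightarrow> bool" where
  "bdd_fun N p a = (THE b. bdd_eval N a p b)"

lemma bdd_fun_eqI: "wf_nodes N \<Longrightarrow> bdd_eval N a p b \<Longrightarrow> bdd_fun N p a = b"
  unfolding bdd_fun_def by (rule the_equality) (use bdd_eval_deterministic in blast)+

lemma bdd_eval_bdd_fun: "wf_nodes N \<Longrightarrow> valid_ptr N p \<Longrightarrow> bdd_eval N a p (bdd_fun N p a)"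
  using bdd_eval_exists bdd_fun_eqI by blast

lemma bdd_fun_Leaf [simp]: "bdd_fun N (Leaf b) = (\<lambda>_. b)"
  unfolding bdd_fun_def by (auto intro!: the_equality bdd_eval.leaf elim: bdd_eval.cases)

lemma bdd_fun_Node:
  assumes "wf_nodes N" and "(u, l, h) \<in> N"
  shows "bdd_fun N (Node u) a = (if a (fst u) then bdd_fun N h a else bdd_fun N l a)"
proof -
  let ?c = "if a (fst u) then h else l"
  have "bdd_eval N a ?c (bdd_fun N ?c a)"
    using bdd_eval_bdd_fun assms wf_nodes_children by simp
  with assms(2) have "bdd_eval N a (Node u) (bdd_fun N ?c a)"
    by (cases u) (auto intro: bdd_eval.node)
  with assms(1) show ?thesis
    by (simp add: bdd_fun_eqI)
qed

lemma bdd_fun_root: "wf_nodes (nodes G) \<Longrightarrow> represents G f \<Longrightarrow> bdd_fun (nodes G) (root G) = f"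
  unfolding represents_def by (simp add: fun_eq_iff bdd_fun_eqI)

lemma bdd_eval_cong:
  assumes "wf_nodes N"
  shows "bdd_eval N a p b \<Longrightarrow> level_ge k p \<Longrightarrow> \<forall>j\<ge>k. a' j = a j \<Longrightarrow> bdd_eval N a' p b"
proof (induction rule: bdd_eval.induct)
  case (leaf b)
  show ?case
    by (rule bdd_eval.leaf)
next
  case (node i i' l h b)
  have "level_ge k (if a i then h else l)"
    using wf_nodes_children[OF assms node.hyps(1)] node.prems(1)
    by (cases l; cases h) auto
  with node have "bdd_eval N a' (if a' i then h else l) b"
    by auto
  with node.hyps(1) show ?case
    by (rule bdd_eval.node)
qed

lemma bdd_fun_cong:
  assumes "wf_nodes N" and "valid_ptr N p" and "level_ge k p" and "\<forall>j\<ge>k. a' j = a j"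
  shows "bdd_fun N p a' = bdd_fun N p a"
  using assms bdd_eval_cong bdd_eval_bdd_fun bdd_fun_eqI by metis

section \<open>Cofactors, subfunctions and injectivity\<close>

definition cofactor :: "((nat \<Rightarrow> bool) \<Rightarrow> bool) \<Rightarrow> nat \<Rightarrow> bool \<Rightarrow> (nat \<Rightarrow> bool) \<Rightarrow> bool" where
  "cofactor \<phi> k b = (\<lambda>a. \<phi> (a(k := b)))"

definition depends_on :: "((nat \<Rightarrow> bool) \<Rightarrow> bool) \<Rightarrow> nat \<Rightarrow> bool" where
  "depends_on \<phi> k \<longleftrightarrow> cofactor \<phi> k True \<noteq> cofactor \<phi> k False"

definition fix_below :: "((nat \<Rightarrow> bool) \<Rightarrow> bool) \<Rightarrow> nat \<Rightarrow> (nat \<Rightarrow> bool) \<Rightarrow> (nat \<Rightarrow> bool) \<Rightarrow> bool" where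
  "fix_below \<phi> k a = (\<lambda>x. \<phi> (\<lambda>j. if j < k then a j else x j))"

lemma cofactor_bdd_fun_Node:
  assumes "wf_nodes N" and "(u, l, h) \<in> N"
  shows "cofactor (bdd_fun N (Node u)) (fst u) True = bdd_fun N h"
    and "cofactor (bdd_fun N (Node u)) (fst u) False = bdd_fun N l"
proof -
  have "bdd_fun N c (a(fst u := b)) = bdd_fun N c a"
    if "valid_ptr N c" and "level_ge (Suc (fst u)) c" for c a b
    by (rule bdd_fun_cong[OF assms(1) that]) simp
  then show "cofactor (bdd_fun N (Node u)) (fst u) True = bdd_fun N h"
    and "cofactor (bdd_fun N (Node u)) (fst u) False = bdd_fun N l"
    unfolding cofactor_def using wf_nodes_children[OF assms]
    by (simp_all add: fun_eq_iff bdd_fun_Node[OF assms])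
qed

lemma cofactor_bdd_fun_level_ge:
  assumes "wf_nodes N" and "valid_ptr N p" and "level_ge (Suc k) p"
  shows "cofactor (bdd_fun N p) k b = bdd_fun N p"
  unfolding cofactor_def using bdd_fun_cong[OF assms] by (simp add: fun_eq_iff)

lemma depends_on_bdd_fun_Node:
  assumes "wf_nodes N" and "(u, l, h) \<in> N"
  shows "depends_on (bdd_fun N (Node u)) (fst u) \<longleftrightarrow> bdd_fun N l \<noteq> bdd_fun N h"
  unfolding depends_on_def cofactor_bdd_fun_Node[OF assms] by auto

lemma not_depends_on_ptrs_from_Suc:
  "wf_nodes N \<Longrightarrow> p \<in> ptrs_from N (Suc k) \<Longrightarrow> \<not> depends_on (bdd_fun N p) k"
  unfolding depends_on_def ptrs_from_def by (simp add: cofactor_bdd_fun_level_ge)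

lemma fix_below_bdd_fun_level_ge:
  assumes "wf_nodes N" and "valid_ptr N p" and "level_ge k p"
  shows "fix_below (bdd_fun N p) k a = bdd_fun N p"
  unfolding fix_below_def using bdd_fun_cong[OF assms] by (simp add: fun_eq_iff)

lemma fix_below_bdd_fun_Node:
  assumes "wf_nodes N" and "(u, l, h) \<in> N" and "fst u < k"
  shows "fix_below (bdd_fun N (Node u)) k (a(fst u := True)) = fix_below (bdd_fun N h) k a"
    and "fix_below (bdd_fun N (Node u)) k (a(fst u := False)) = fix_below (bdd_fun N l) k a"
proof -
  have merge: "(\<lambda>j. if j < k then (a(fst u := b)) j else x j)
      = (\<lambda>j. if j < k then a j else x j)(fst u := b)" for b x
    using assms(3) by (auto simp: fun_eq_iff)
  show "fix_below (bdd_fun N (Node u)) k (a(fst u := True)) = fix_below (bdd_fun N h) k a"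
    and "fix_below (bdd_fun N (Node u)) k (a(fst u := False)) = fix_below (bdd_fun N l) k a"
    using cofactor_bdd_fun_Node[OF assms(1,2)]
    unfolding fix_below_def merge by (simp_all add: cofactor_def fun_eq_iff)
qed

lemma reach_Node_level:
  assumes "wf_nodes N"
  shows "reach N p v \<Longrightarrow> p = Node v \<or> (\<exists>u. p = Node u \<and> fst u < fst v)"
proof (induction rule: reach.induct)
  case (self u)
  then show ?case
    by simp
next
  case (low u l h v)
  then show ?case
    using wf_nodes_children[OF assms low.hyps(1)] by (cases l) auto
next
  case (high u l h v)
  then show ?case
    using wf_nodes_children[OF assms high.hyps(1)] by (cases h) auto
qed

text \<open>The assignment fixes the variables along a path from the pointer to the node.\<close>
lemma fix_below_bdd_fun_reach:
  assumes "wf_nodes N"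
  shows "reach N p v \<Longrightarrow> valid_ptr N p \<Longrightarrow> \<exists>a. fix_below (bdd_fun N p) (fst v) a = bdd_fun N (Node v)"
proof (induction rule: reach.induct)
  case (self u)
  then show ?case
    using fix_below_bdd_fun_level_ge[OF assms] by simp
next
  case (low u l h v)
  have "fst u < fst v"
    using reach_Node_level[OF assms low.hyps(2)] wf_nodes_children(3)[OF assms low.hyps(1)] by auto
  moreover obtain a where "fix_below (bdd_fun N l) (fst v) a = bdd_fun N (Node v)"
    using low.IH wf_nodes_children[OF assms low.hyps(1)] by blast
  ultimately show ?case
    using fix_below_bdd_fun_Node(2)[OF assms low.hyps(1)] by metis
next
  case (high u l h v)
  have "fst u < fst v"
    using reach_Node_level[OF assms high.hyps(2)] wf_nodes_children(4)[OF assms high.hyps(1)] by auto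
  moreover obtain a where "fix_below (bdd_fun N h) (fst v) a = bdd_fun N (Node v)"
    using high.IH wf_nodes_children[OF assms high.hyps(1)] by blast
  ultimately show ?case
    using fix_below_bdd_fun_Node(1)[OF assms high.hyps(1)] by metis
qed

text \<open>The pointer is where the path selected by the assignment first reaches level k or deeper.\<close>
lemma fix_below_bdd_fun_ex_ptr:
  assumes "wf_nodes N" and "valid_ptr N p"
  shows "\<exists>q \<in> ptrs_from N k. fix_below (bdd_fun N p) k a = bdd_fun N q"
proof -
  have "bdd_eval N a p b \<Longrightarrow> ?thesis" for b
  proof (induction rule: bdd_eval.induct)
    case (leaf b)
    show ?case
      by (intro bexI[of _ "Leaf b"]) (simp_all add: fix_below_def ptrs_from_def)
  next
    case (node i i' l h b)
    show ?case
    proof (cases "k \<le> i")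
      case True
      have "valid_ptr N (Node (i, i'))"
        using node.hyps(1) by auto
      with True show ?thesis
        using fix_below_bdd_fun_level_ge[OF assms(1)]
        by (intro bexI[of _ "Node (i, i')"]) (simp_all add: ptrs_from_def)
    next
      case False
      then have "fix_below (bdd_fun N (Node (i, i'))) k a = fix_below (bdd_fun N (if a i then h else l)) k a"
        using fix_below_bdd_fun_Node[OF assms(1) node.hyps(1), of k a]
        by (cases "a i") (simp_all add: fun_upd_idem)
      with node.IH show ?thesis
        by simp
    qed
  qed
  then show ?thesis
    using bdd_eval_exists[OF assms] by blast
qed

lemma depends_on_level_if_inj_on_below:
  assumes red: "reduced N" and u: "(u, l, h) \<in> N"
    and inj: "inj_on (bdd_fun N) (ptrs_from N (Suc (fst u)))"
  shows "depends_on (bdd_fun N (Node u)) (fst u)"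
proof -
  have wf: "wf_nodes N"
    using red by (rule reduced_wf_nodes)
  have "l \<in> ptrs_from N (Suc (fst u))" and "h \<in> ptrs_from N (Suc (fst u))"
    using wf_nodes_children[OF wf u] by (simp_all add: ptrs_from_def)
  with inj reduced_children_neq[OF red u] have "bdd_fun N l \<noteq> bdd_fun N h"
    by (auto dest: inj_onD)
  then show ?thesis
    using depends_on_bdd_fun_Node[OF wf u] by simp
qed

lemma eq_if_bdd_fun_eq_on_level:
  assumes red: "reduced N" and inj: "inj_on (bdd_fun N) (ptrs_from N (Suc k))"
    and p: "p \<in> ptrs_from N k" "p \<notin> ptrs_from N (Suc k)" and q: "q \<in> ptrs_from N k"
    and eq: "bdd_fun N p = bdd_fun N q"
  shows "p = q"
proof -
  have wf: "wf_nodes N"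
    using red by (rule reduced_wf_nodes)
  obtain u l h where u: "p = Node u" "(u, l, h) \<in> N" "fst u = k"
    using p by (rule node_on_level)
  have "depends_on (bdd_fun N q) k"
    using depends_on_level_if_inj_on_below[OF red u(2)] inj u eq by simp
  then have "q \<notin> ptrs_from N (Suc k)"
    using not_depends_on_ptrs_from_Suc[OF wf] by blast
  with q obtain v l' h' where v: "q = Node v" "(v, l', h') \<in> N" "fst v = k"
    by (rule node_on_level)
  have "bdd_fun N l = bdd_fun N l'" and "bdd_fun N h = bdd_fun N h'"
    using cofactor_bdd_fun_Node[OF wf u(2)] cofactor_bdd_fun_Node[OF wf v(2)] u v eq by metis+
  then have "l = l'" and "h = h'"
    using inj wf_nodes_children[OF wf u(2)] wf_nodes_children[OF wf v(2)] u(3) v(3)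
    by (auto simp: ptrs_from_def dest: inj_onD)
  then show "p = q"
    using reduced_unique_children[OF red u(2)] u v by simp
qed

theorem inj_on_bdd_fun:
  assumes red: "reduced N"
  shows "inj_on (bdd_fun N) {p. valid_ptr N p}"
proof -
  have "inj_on (bdd_fun N) (ptrs_from N k)" for k
    using wf_nodes_finite[OF reduced_wf_nodes[OF red]]
  proof (induction k rule: level_induct)
    case (bottom k)
    show ?case
    proof (rule inj_onI)
      fix p q
      assume "p \<in> ptrs_from N k" "q \<in> ptrs_from N k" and eq: "bdd_fun N p = bdd_fun N q"
      with bottom obtain b c where "p = Leaf b" "q = Leaf c"
        by (metis leaf_if_below_all_nodes)
      with eq show "p = q"
        by (simp add: fun_eq_iff)
    qed
  next
    case (step k)
    show ?case
    proof (rule inj_onI)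
      fix p q
      assume pq: "p \<in> ptrs_from N k" "q \<in> ptrs_from N k" and eq: "bdd_fun N p = bdd_fun N q"
      consider "p \<in> ptrs_from N (Suc k)" "q \<in> ptrs_from N (Suc k)"
        | "p \<notin> ptrs_from N (Suc k)" | "q \<notin> ptrs_from N (Suc k)"
        by blast
      then show "p = q"
      proof cases
        case 1
        with step.IH eq show ?thesis
          by (auto dest: inj_onD)
      next
        case 2
        from eq_if_bdd_fun_eq_on_level[OF red step.IH pq(1) this pq(2) eq] show ?thesis .
      next
        case 3
        from eq_if_bdd_fun_eq_on_level[OF red step.IH pq(2) this pq(1) eq[symmetric]] show ?thesis
          by simp
      qed
    qed
  qed
  from this[of 0] show ?thesis
    by simp
qed

section \<open>Canonicity\<close>

definition level_funs :: "node set \<Rightarrow> nat \<Rightarrow> ((nat \<Rightarrow> bool) \<Rightarrow> bool) set" where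
  "level_funs N k = {bdd_fun N (Node u) | u l h. (u, l, h) \<in> N \<and> fst u = k}"

definition essential_subfuns :: "((nat \<Rightarrow> bool) \<Rightarrow> bool) \<Rightarrow> nat \<Rightarrow> ((nat \<Rightarrow> bool) \<Rightarrow> bool) set" where
  "essential_subfuns f k = {fix_below f k a | a. depends_on (fix_below f k a) k}"

theorem level_funs_eq_essential_subfuns:
  assumes "is_robdd G" and "represents G f"
  shows "level_funs (nodes G) k = essential_subfuns f k"
proof
  let ?N = "nodes G"
  have red: "reduced ?N"
    using assms(1) by (rule is_robdd_reduced)
  then have wf: "wf_nodes ?N"
    by (rule reduced_wf_nodes)
  have root: "bdd_fun ?N (root G) = f"
    using wf assms(2) by (rule bdd_fun_root)
  have valid_root: "valid_ptr ?N (root G)"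
    using assms(1) by (rule is_robdd_valid_root)
  show "level_funs ?N k \<subseteq> essential_subfuns f k"
  proof
    fix \<phi>
    assume "\<phi> \<in> level_funs ?N k"
    then obtain u l h where u: "(u, l, h) \<in> ?N" "fst u = k" and \<phi>: "\<phi> = bdd_fun ?N (Node u)"
      unfolding level_funs_def by blast
    obtain a where "fix_below f k a = \<phi>"
      using fix_below_bdd_fun_reach[OF wf is_robdd_reach[OF assms(1) u(1)] valid_root] root u \<phi>
      by auto
    moreover have "inj_on (bdd_fun ?N) (ptrs_from ?N (Suc k))"
      using inj_on_bdd_fun[OF red] by (rule inj_on_subset) (auto simp: ptrs_from_def)
    then have "depends_on \<phi> k"
      using depends_on_level_if_inj_on_below[OF red u(1)] u(2) \<phi> by simp
    ultimately show "\<phi> \<in> essential_subfuns f k"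
      by (auto simp: essential_subfuns_def)
  qed
  show "essential_subfuns f k \<subseteq> level_funs ?N k"
  proof
    fix \<phi>
    assume "\<phi> \<in> essential_subfuns f k"
    then obtain a where \<phi>: "\<phi> = fix_below f k a" and dep: "depends_on \<phi> k"
      by (auto simp: essential_subfuns_def)
    obtain q where q: "q \<in> ptrs_from ?N k" and \<phi>_q: "\<phi> = bdd_fun ?N q"
      using fix_below_bdd_fun_ex_ptr[OF wf valid_root] root \<phi> by metis
    moreover have "q \<notin> ptrs_from ?N (Suc k)"
      using not_depends_on_ptrs_from_Suc[OF wf] dep \<phi>_q by blast
    ultimately obtain u l h where "q = Node u" "(u, l, h) \<in> ?N" "fst u = k"
      by (blast elim: node_on_level)
    with \<phi>_q show "\<phi> \<in> level_funs ?N k"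
      unfolding level_funs_def by blast
  qed
qed

definition nodes_from :: "node set \<Rightarrow> nat \<Rightarrow> node set" where
  "nodes_from N k = {n \<in> N. k \<le> fst (fst n)}"

lemma bdd_eval_nodes_from:
  assumes "wf_nodes N" and "nodes_from N k \<subseteq> N'"
  shows "bdd_eval N a p b \<Longrightarrow> level_ge k p \<Longrightarrow> bdd_eval N' a p b"
proof (induction rule: bdd_eval.induct)
  case (leaf b)
  show ?case
    by (rule bdd_eval.leaf)
next
  case (node i i' l h b)
  have "level_ge k (if a i then h else l)"
    using wf_nodes_children[OF assms(1) node.hyps(1)] node.prems by (cases l; cases h) auto
  moreover have "((i, i'), l, h) \<in> N'"
    using assms(2) node.hyps(1) node.prems by (auto simp: nodes_from_def)
  ultimately show ?case
    using node.IH by (auto intro: bdd_eval.node)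
qed

lemma bdd_fun_nodes_from:
  assumes "wf_nodes N" and "wf_nodes N'" and "nodes_from N k = nodes_from N' k"
    and "valid_ptr N p" and "level_ge k p"
  shows "valid_ptr N' p" and "bdd_fun N' p = bdd_fun N p"
proof -
  have sub: "nodes_from N k \<subseteq> N'"
    using assms(3) by (auto simp: nodes_from_def)
  with assms(4,5) show "valid_ptr N' p"
    by (cases p) (force simp: nodes_from_def)+
  show "bdd_fun N' p = bdd_fun N p"
  proof
    fix a
    have "bdd_eval N' a p (bdd_fun N p a)"
      using bdd_eval_nodes_from[OF assms(1) sub bdd_eval_bdd_fun[OF assms(1,4)] assms(5)] .
    with assms(2) show "bdd_fun N' p a = bdd_fun N p a"
      by (rule bdd_fun_eqI)
  qed
qed

definition child_pairs :: "node set \<Rightarrow> nat \<Rightarrow> (ptr \<times> ptr) set" where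
  "child_pairs N k = {(l, h). \<exists>u. (u, l, h) \<in> N \<and> fst u = k}"

lemma child_pairs_subset:
  assumes G1: "is_robdd G1" "represents G1 f" and G2: "is_robdd G2" "represents G2 f"
    and above: "nodes_from (nodes G1) (Suc k) = nodes_from (nodes G2) (Suc k)"
  shows "child_pairs (nodes G1) k \<subseteq> child_pairs (nodes G2) k"
proof
  let ?N1 = "nodes G1" and ?N2 = "nodes G2"
  have wf1: "wf_nodes ?N1" and red2: "reduced ?N2" and wf2: "wf_nodes ?N2"
    using G1(1) G2(1) is_robdd_reduced reduced_wf_nodes by blast+
  fix pr
  assume "pr \<in> child_pairs ?N1 k"
  then obtain u l h where pr: "pr = (l, h)" and u: "(u, l, h) \<in> ?N1" "fst u = k"
    unfolding child_pairs_def by blast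
  have "bdd_fun ?N1 (Node u) \<in> level_funs ?N1 k"
    using u unfolding level_funs_def by blast
  then have "bdd_fun ?N1 (Node u) \<in> level_funs ?N2 k"
    using level_funs_eq_essential_subfuns[OF G1] level_funs_eq_essential_subfuns[OF G2] by simp
  then obtain v l' h' where v: "(v, l', h') \<in> ?N2" "fst v = k"
    and eq: "bdd_fun ?N1 (Node u) = bdd_fun ?N2 (Node v)"
    unfolding level_funs_def by blast
  have same_child: "c' = c"
    if "bdd_fun ?N2 c' = bdd_fun ?N1 c" and "valid_ptr ?N2 c'"
      and "valid_ptr ?N1 c" and "level_ge (Suc k) c" for c c'
    using bdd_fun_nodes_from[OF wf1 wf2 above that(3,4)] inj_on_bdd_fun[OF red2] that(1,2)
    by (metis inj_onD mem_Collect_eq)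
  have "bdd_fun ?N2 l' = bdd_fun ?N1 l" and "bdd_fun ?N2 h' = bdd_fun ?N1 h"
    using cofactor_bdd_fun_Node[OF wf1 u(1)] cofactor_bdd_fun_Node[OF wf2 v(1)] eq u(2) v(2)
    by metis+
  then have "l' = l" and "h' = h"
    using same_child wf_nodes_children[OF wf1 u(1)] wf_nodes_children[OF wf2 v(1)] u(2)
    by blast+
  with v pr show "pr \<in> child_pairs ?N2 k"
    unfolding child_pairs_def by blast
qed

definition pair_less :: "ptr \<times> ptr \<Rightarrow> ptr \<times> ptr \<Rightarrow> bool" where
  "pair_less x y \<longleftrightarrow> ptr_less (fst x) (fst y) \<or> (fst x = fst y \<and> ptr_less (snd x) (snd y))"

lemma id_eq_card_smaller_child_pairs:
  assumes red: "reduced (nodes G)" and compact: "compact_ids G" and ord: "respects_order G"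
    and u: "(u, l, h) \<in> nodes G"
  shows "snd u = card {pr \<in> child_pairs (nodes G) (fst u). pair_less pr (l, h)}"
proof -
  let ?N = "nodes G" and ?k = "fst u"
  define S where "S = {n \<in> ?N. fst (fst n) = ?k \<and> pair_less (snd n) (l, h)}"
  have wf: "wf_nodes ?N"
    using red by (rule reduced_wf_nodes)
  have "pair_less (snd n) (l, h) \<longleftrightarrow> snd (fst n) < snd u" if "n \<in> ?N" and "fst (fst n) = ?k" for n
    using ord[unfolded respects_order_def, rule_format, OF that(1) u] that(2)
    by (simp add: uid_of_def label_of_def low_of_def high_of_def pair_less_def)
  then have S_eq: "S = {n \<in> ?N. fst (fst n) = ?k \<and> snd (fst n) < snd u}"
    unfolding S_def by blast
  obtain c where c: "level_ids G ?k = {..<c}"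
    using compact unfolding compact_ids_def by (metis atLeast0LessThan)
  have "snd u \<in> level_ids G ?k"
    using u unfolding level_ids_def uid_of_def by force
  with c have "{..<snd u} \<subseteq> level_ids G ?k"
    by auto
  then have "(snd \<circ> fst) ` S = {..<snd u}"
    unfolding S_eq level_ids_def uid_of_def by force
  moreover have "inj_on (snd \<circ> fst) S"
    using wf_nodes_unique[OF wf] unfolding S_def inj_on_def by (auto simp: prod_eq_iff)
  ultimately have "card S = snd u"
    by (metis card_image card_lessThan)
  moreover have "snd ` S = {pr \<in> child_pairs ?N ?k. pair_less pr (l, h)}"
    unfolding S_def child_pairs_def by force
  moreover have "inj_on snd S"
    using reduced_unique_children[OF red] unfolding S_def inj_on_def by force
  ultimately show ?thesis
    by (metis card_image)
qed

lemma node_in_if_child_pairs_eq: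
  assumes G1: "reduced (nodes G1)" "compact_ids G1" "respects_order G1"
    and G2: "reduced (nodes G2)" "compact_ids G2" "respects_order G2"
    and pairs: "child_pairs (nodes G1) (fst u) = child_pairs (nodes G2) (fst u)"
    and u: "(u, l, h) \<in> nodes G1"
  shows "(u, l, h) \<in> nodes G2"
proof -
  have "(l, h) \<in> child_pairs (nodes G2) (fst u)"
    using u pairs unfolding child_pairs_def by blast
  then obtain v where v: "(v, l, h) \<in> nodes G2" and "fst v = fst u"
    unfolding child_pairs_def by blast
  moreover have "snd v = snd u"
    using id_eq_card_smaller_child_pairs[OF G1 u] id_eq_card_smaller_child_pairs[OF G2 v]
      pairs \<open>fst v = fst u\<close> by simp
  ultimately show ?thesis
    by (metis prod_eq_iff)
qed

lemma nodes_from_eq_if_represent_same: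
  assumes G1: "is_robdd G1" "compact_ids G1" "respects_order G1" "represents G1 f"
    and G2: "is_robdd G2" "compact_ids G2" "respects_order G2" "represents G2 f"
  shows "nodes_from (nodes G1) k = nodes_from (nodes G2) k"
proof -
  have red1: "reduced (nodes G1)" and red2: "reduced (nodes G2)"
    using G1(1) G2(1) by (simp_all add: is_robdd_reduced)
  have "finite (nodes G1 \<union> nodes G2)"
    using red1 red2 by (simp add: reduced_wf_nodes wf_nodes_finite)
  then show ?thesis
  proof (induction k rule: level_induct)
    case (bottom k)
    then have "\<forall>n \<in> nodes G1 \<union> nodes G2. fst (fst n) < k"
      by fastforce
    then show ?case
      unfolding nodes_from_def by (blast dest: leD)
  next
    case (step k)
    have "child_pairs (nodes G1) k = child_pairs (nodes G2) k"
      using child_pairs_subset[OF G1(1,4) G2(1,4) step.IH]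
        child_pairs_subset[OF G2(1,4) G1(1,4) step.IH[symmetric]] by blast
    then have level: "(u, l, h) \<in> nodes G1 \<longleftrightarrow> (u, l, h) \<in> nodes G2" if "fst u = k" for u l h
      using node_in_if_child_pairs_eq[OF red1 G1(2,3) red2 G2(2,3)]
        node_in_if_child_pairs_eq[OF red2 G2(2,3) red1 G1(2,3)] that by metis
    show ?case
    proof (rule set_eqI)
      fix n :: node
      obtain u l h where n: "n = (u, l, h)"
        by (cases n)
      have "n \<in> nodes_from (nodes G1) (Suc k) \<longleftrightarrow> n \<in> nodes_from (nodes G2) (Suc k)"
        using step.IH by simp
      with level n show "n \<in> nodes_from (nodes G1) k \<longleftrightarrow> n \<in> nodes_from (nodes G2) k"
        unfolding nodes_from_def by (cases "fst u = k") auto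
    qed
  qed
qed

theorem robdd_canonical:
  assumes G1: "is_robdd G1" "compact_ids G1" "respects_order G1" "represents G1 f"
    and G2: "is_robdd G2" "compact_ids G2" "respects_order G2" "represents G2 f"
  shows "G1 = G2"
proof -
  have red1: "reduced (nodes G1)" and red2: "reduced (nodes G2)"
    using G1(1) G2(1) by (simp_all add: is_robdd_reduced)
  have nodes: "nodes G1 = nodes G2"
    using nodes_from_eq_if_represent_same[OF G1 G2, of 0] by (simp add: nodes_from_def)
  have "bdd_fun (nodes G1) (root G1) = bdd_fun (nodes G1) (root G2)"
    using bdd_fun_root[OF reduced_wf_nodes[OF red1] G1(4)]
      bdd_fun_root[OF reduced_wf_nodes[OF red2] G2(4)] nodes by simp
  then have "root G1 = root G2"
    using inj_on_bdd_fun[OF red1] is_robdd_valid_root[OF G1(1)] is_robdd_valid_root[OF G2(1)] nodes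
    by (simp add: inj_on_eq_iff)
  with nodes show ?thesis
    by simp
qed

lemma set_level_nodes:
  assumes "wf_nodes (nodes G)"
  shows "set (level_nodes G i) = {n \<in> nodes G. fst (fst n) = i}"
proof -
  have "level_ids G i \<subseteq> snd ` fst ` nodes G"
    by (force simp: level_ids_def uid_of_def)
  then have fin: "finite (level_ids G i)"
    using wf_nodes_finite[OF assms] finite_subset by blast
  have the_node: "(THE n. n \<in> nodes G \<and> uid_of n = (i, k)) = n"
    if "n \<in> nodes G" and "fst n = (i, k)" for n k
  proof (rule the_equality)
    fix n'
    assume "n' \<in> nodes G \<and> uid_of n' = (i, k)"
    with that show "n' = n"
      using inj_on_fst_nodes[OF assms] by (metis inj_onD uid_of_def)
  qed (use that in \<open>simp add: uid_of_def\<close>)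
  show ?thesis
    unfolding level_nodes_def set_map set_sorted_list_of_set[OF fin]
  proof (intro equalityI subsetI)
    fix x
    assume "x \<in> (\<lambda>k. THE n. n \<in> nodes G \<and> uid_of n = (i, k)) ` level_ids G i"
    then obtain k n where "n \<in> nodes G" "fst n = (i, k)" "x = (THE n. n \<in> nodes G \<and> uid_of n = (i, k))"
      by (auto simp: level_ids_def uid_of_def)
    then show "x \<in> {n \<in> nodes G. fst (fst n) = i}"
      using the_node by simp
  next
    fix n
    assume n: "n \<in> {n \<in> nodes G. fst (fst n) = i}"
    then have "fst n = (i, snd (fst n))" and "snd (fst n) \<in> level_ids G i"
      by (auto simp: level_ids_def uid_of_def prod_eq_iff)
    with n show "n \<in> (\<lambda>k. THE n. n \<in> nodes G \<and> uid_of n = (i, k)) ` level_ids G i"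
      using the_node by (metis (no_types, lifting) image_eqI mem_Collect_eq)
  qed
qed

lemma list_eq_if_nth_options_eq:
  assumes "\<And>j. (if j < length xs then Some (xs ! j) else None)
             = (if j < length ys then Some (ys ! j) else None)"
  shows "xs = ys"
proof (rule nth_equalityI)
  show "length xs = length ys"
  proof (rule ccontr)
    assume "length xs \<noteq> length ys"
    then have "length xs < length ys \<or> length ys < length xs"
      by arith
    then show False
      using assms[of "length xs"] assms[of "length ys"] by auto
  qed
  then show "xs ! j = ys ! j" if "j < length xs" for j
    using assms[of j] that by simp
qed

lemma nodes_eq_iff_jth_node_eq:
  assumes "wf_nodes (nodes G1)" and "wf_nodes (nodes G2)"
  shows "nodes G1 = nodes G2 \<longleftrightarrow> (\<forall>i j. jth_node G1 i j = jth_node G2 i j)"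
proof
  assume "nodes G1 = nodes G2"
  then show "\<forall>i j. jth_node G1 i j = jth_node G2 i j"
    by (simp add: jth_node_def level_nodes_def level_ids_def)
next
  assume "\<forall>i j. jth_node G1 i j = jth_node G2 i j"
  then have "level_nodes G1 i = level_nodes G2 i" for i
    by (intro list_eq_if_nth_options_eq) (simp add: jth_node_def)
  then have "{n \<in> nodes G1. fst (fst n) = i} = {n \<in> nodes G2. fst (fst n) = i}" for i
    using set_level_nodes[OF assms(1)] set_level_nodes[OF assms(2)] by metis
  then show "nodes G1 = nodes G2"
    by blast
qed

lemma robdd_root_eq:
  assumes G1: "is_robdd G1" and G2: "is_robdd G2" and nodes: "nodes G1 = nodes G2"
    and leaves: "\<forall>b. root G1 = Leaf b \<longleftrightarrow> root G2 = Leaf b"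
  shows "root G1 = root G2"
proof (cases "root G1")
  case (Leaf b)
  with leaves[rule_format, of b] show ?thesis
    by simp
next
  case (Node u)
  with leaves obtain v where v: "root G2 = Node v"
    by (cases "root G2") auto
  obtain l h l' h' where "(u, l, h) \<in> nodes G2" and "(v, l', h') \<in> nodes G1"
    using is_robdd_valid_root[OF G1] is_robdd_valid_root[OF G2] Node v nodes by auto
  then have "reach (nodes G1) (Node u) v" and "reach (nodes G1) (Node v) u"
    using is_robdd_reach[OF G1] is_robdd_reach[OF G2] Node v nodes by metis+
  moreover have wf: "wf_nodes (nodes G1)"
    using G1 is_robdd_reduced reduced_wf_nodes by blast
  ultimately have "u = v \<or> fst u < fst v" and "v = u \<or> fst v < fst u"
    using reach_Node_level[OF wf] by blast+
  then have "u = v"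
    by auto
  with Node v show ?thesis
    by simp
qed

theorem proposition7:
  fixes Gf Gg :: bdd and f g :: "(nat \<Rightarrow> bool) \<Rightarrow> bool"
  assumes "is_robdd Gf" and "is_robdd Gg"
    and "represents Gf f" and "represents Gg g"
    and "compact_ids Gf" and "compact_ids Gg"
    and "respects_order Gf" and "respects_order Gg"
  shows "f = g \<longleftrightarrow>
           ((\<forall>i j. jth_node Gf i j = jth_node Gg i j)
            \<and> (\<forall>b. root Gf = Leaf b \<longleftrightarrow> root Gg = Leaf b))"
proof -
  have wf: "wf_nodes (nodes Gf)" "wf_nodes (nodes Gg)"
    using assms(1,2) is_robdd_reduced reduced_wf_nodes by blast+
  have "f = g \<longleftrightarrow> Gf = Gg"
  proof
    assume "f = g"
    with assms show "Gf = Gg"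
      using robdd_canonical by blast
  next
    assume "Gf = Gg"
    with assms(3,4) show "f = g"
      using bdd_fun_root[OF wf(1)] by metis
  qed
  also have "\<dots> \<longleftrightarrow> nodes Gf = nodes Gg \<and> root Gf = root Gg"
    by auto
  also have "\<dots> \<longleftrightarrow> (\<forall>i j. jth_node Gf i j = jth_node Gg i j)
                     \<and> (\<forall>b. root Gf = Leaf b \<longleftrightarrow> root Gg = Leaf b)"
    using nodes_eq_iff_jth_node_eq[OF wf] robdd_root_eq[OF assms(1,2)] by auto
  finally show ?thesis .
qed

end
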